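(* (i) For every $\mathbf A\in\mathsf{ICM}$, the ring reduct $\mathbf A^-$ is a reduced commutative ring. (ii) For every reduced commutative ring $\mathbf A$ there is $\mathbf B\in\mathsf{ICM}$ such that $\mathbf A$ is a subring of $\mathbf B^-$.
   Context: Rings are unital in the language $\{+,\cdot,-,0,1\}$; reduced means no nonzero nilpotents. A field is weakly rooted if it has characteristic $0$, or prime characteristic $p$ with every element having a $p$-th root. Weak inverse: $a^*=a^{-1}$ if $a\ne0$, $0^*=0$; weak $p$-root: $r_p(a)=\sqrt[p]{a}$ if the characteristic is $p$, else $0$. An implicitly closed field is a weakly rooted field expanded by $(\,)^*$ and all $r_p$; $\mathsf{ICM}$ is the class of algebras isomorphic to subalgebras of direct products of implicitly closed fields. For $\mathbf A\in\mathsf{ICM}$, $\mathbf A^-$ denotes its reduct to $\{+,\cdot,-,0,1\}$. *)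

theory Defs
  imports "HOL-Algebra.Algebra"
begin

text \<open>Algebras in the language of implicitly closed fields:
  ring operations (+, *, 0, 1 from the HOL-Algebra ring record), an explicit
  unary minus, the weak inverse, and the weak p-th roots (one for every prime p).\<close>

record 'a icalg = "'a ring" +
  neg   :: "'a \<Rightarrow> 'a"
  winv  :: "'a \<Rightarrow> 'a"
  wroot :: "nat \<Rightarrow> 'a \<Rightarrow> 'a"

text \<open>The ring reduct A^- (to the language {+, *, -, 0, 1}; in HOL-Algebra the minus
  of a ring is determined by the additive group).\<close>

definition reduct :: "('a, 'm) icalg_scheme \<Rightarrow> 'a ring" where
  "reduct A = \<lparr>carrier = carrier A, monoid.mult = monoid.mult A, one = one A,
               ring.zero = ring.zero A, ring.add = ring.add A\<rparr>"

definition ring_char :: "('a, 'm) ring_scheme \<Rightarrow> nat" where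
  "ring_char R = (if \<exists>n::nat. n > 0 \<and> add_pow R n \<one>\<^bsub>R\<^esub> = \<zero>\<^bsub>R\<^esub>
                  then (LEAST n::nat. n > 0 \<and> add_pow R n \<one>\<^bsub>R\<^esub> = \<zero>\<^bsub>R\<^esub>) else 0)"

definition weakly_rooted :: "('a, 'm) ring_scheme \<Rightarrow> bool" where
  "weakly_rooted F \<longleftrightarrow> field F \<and>
     (ring_char F = 0 \<or>
      (Factorial_Ring.prime (ring_char F) \<and>
       (\<forall>a\<in>carrier F. \<exists>b\<in>carrier F. b [^]\<^bsub>F\<^esub> ring_char F = a)))"

definition implicitly_closed_field :: "('a, 'm) icalg_scheme \<Rightarrow> bool" where
  "implicitly_closed_field F \<longleftrightarrow> weakly_rooted F \<and>
     (\<forall>a\<in>carrier F. neg F a = \<ominus>\<^bsub>F\<^esub> a) \<and>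
     (\<forall>a\<in>carrier F. a \<noteq> \<zero>\<^bsub>F\<^esub> \<longrightarrow> winv F a = inv\<^bsub>F\<^esub> a) \<and>
     winv F \<zero>\<^bsub>F\<^esub> = \<zero>\<^bsub>F\<^esub> \<and>
     (\<forall>p. Factorial_Ring.prime (p::nat) \<longrightarrow> (\<forall>a\<in>carrier F.
        (if ring_char F = p
         then wroot F p a \<in> carrier F \<and> wroot F p a [^]\<^bsub>F\<^esub> p = a
         else wroot F p a = \<zero>\<^bsub>F\<^esub>)))"

definition is_icalg :: "('a, 'm) icalg_scheme \<Rightarrow> bool" where
  "is_icalg A \<longleftrightarrow>
     \<zero>\<^bsub>A\<^esub> \<in> carrier A \<and> \<one>\<^bsub>A\<^esub> \<in> carrier A \<and>
     (\<forall>x\<in>carrier A. \<forall>y\<in>carrier A. x \<oplus>\<^bsub>A\<^esub> y \<in> carrier A \<and> x \<otimes>\<^bsub>A\<^esub> y \<in> carrier A) \<and>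
     (\<forall>x\<in>carrier A. neg A x \<in> carrier A \<and> winv A x \<in> carrier A \<and>
        (\<forall>p. Factorial_Ring.prime (p::nat) \<longrightarrow> wroot A p x \<in> carrier A))"

definition embeds_into_product ::
  "('a, 'm) icalg_scheme \<Rightarrow> 'i set \<Rightarrow> ('i \<Rightarrow> ('f, 'n) icalg_scheme) \<Rightarrow> ('a \<Rightarrow> 'i \<Rightarrow> 'f) \<Rightarrow> bool" where
  "embeds_into_product A I F h \<longleftrightarrow>
     inj_on h (carrier A) \<and>
     h ` carrier A \<subseteq> (\<Pi>\<^sub>E i\<in>I. carrier (F i)) \<and>
     h \<zero>\<^bsub>A\<^esub> = (\<lambda>i\<in>I. \<zero>\<^bsub>F i\<^esub>) \<and>
     h \<one>\<^bsub>A\<^esub> = (\<lambda>i\<in>I. \<one>\<^bsub>F i\<^esub>) \<and>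
     (\<forall>x\<in>carrier A. \<forall>y\<in>carrier A.
        h (x \<oplus>\<^bsub>A\<^esub> y) = (\<lambda>i\<in>I. h x i \<oplus>\<^bsub>F i\<^esub> h y i) \<and>
        h (x \<otimes>\<^bsub>A\<^esub> y) = (\<lambda>i\<in>I. h x i \<otimes>\<^bsub>F i\<^esub> h y i)) \<and>
     (\<forall>x\<in>carrier A.
        h (neg A x) = (\<lambda>i\<in>I. neg (F i) (h x i)) \<and>
        h (winv A x) = (\<lambda>i\<in>I. winv (F i) (h x i)) \<and>
        (\<forall>p. Factorial_Ring.prime (p::nat) \<longrightarrow> h (wroot A p x) = (\<lambda>i\<in>I. wroot (F i) p (h x i))))"

text \<open>Membership in ICM, with the index set living in type 'i and the fields
  living in type 'f (made explicit via TYPE arguments).\<close>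

definition ICM :: "'i itself \<Rightarrow> 'f itself \<Rightarrow> ('a, 'm) icalg_scheme \<Rightarrow> bool" where
  "ICM _ _ A \<longleftrightarrow> is_icalg A \<and>
     (\<exists>(I::'i set) (F::'i \<Rightarrow> 'f icalg) h.
        (\<forall>i\<in>I. implicitly_closed_field (F i)) \<and> embeds_into_product A I F h)"

definition reduced_ring :: "('a, 'm) ring_scheme \<Rightarrow> bool" where
  "reduced_ring R \<longleftrightarrow>
     (\<forall>a\<in>carrier R. \<forall>n::nat. a [^]\<^bsub>R\<^esub> n = \<zero>\<^bsub>R\<^esub> \<longrightarrow> a = \<zero>\<^bsub>R\<^esub>)"

end

theory Submission
  imports Defs "HOL-Library.Nat_Bijection" "HOL-Algebra.Weak_Morphisms"
begin

text \<open>Ring identities are checked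
  coordinatewise, so the reduct is a commutative ring, and a nilpotent element is nilpotent in
  every coordinate, hence zero.

  (ii) Let \<open>R\<close> be reduced and \<open>a \<noteq> \<zero>\<close>. The powers of \<open>a\<close> avoid \<open>\<zero>\<close>, so Zorn's lemma gives
  a prime ideal \<open>P\<close> with \<open>a \<notin> P\<close>. A maximal ideal of \<open>(R/P)[X]\<close> containing \<open>a X - 1\<close>
  yields a field in which \<open>a\<close> becomes invertible, and its algebraic closure is weakly rooted,
  having all \<open>n\<close>-th roots and characteristic \<open>0\<close> or prime. Expanding these fields by the weak
  inverse and the weak roots and taking their product over all \<open>a \<noteq> \<zero>\<close> gives the required
  algebra. To land in the carrier type fixed by the statement, an element of the algebraic
  closure is coded by a polynomial vanishing at it together with its index among the roots.\<close>

section \<open>Reducts of ICM algebras\<close>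

lemma reduct_simps [simp]:
  "carrier (reduct A) = carrier A"
  "x \<otimes>\<^bsub>reduct A\<^esub> y = x \<otimes>\<^bsub>A\<^esub> y" "x \<oplus>\<^bsub>reduct A\<^esub> y = x \<oplus>\<^bsub>A\<^esub> y"
  "\<one>\<^bsub>reduct A\<^esub> = \<one>\<^bsub>A\<^esub>" "\<zero>\<^bsub>reduct A\<^esub> = \<zero>\<^bsub>A\<^esub>"
  by (simp_all add: reduct_def)

lemma cring_if_injective_pointwise_hom:
  fixes A :: "('a, 'm) ring_scheme" and G :: "'i \<Rightarrow> ('f, 'n) ring_scheme"
  assumes G: "\<And>i. i \<in> I \<Longrightarrow> cring (G i)"
    and hc: "\<And>x i. x \<in> carrier A \<Longrightarrow> i \<in> I \<Longrightarrow> h x i \<in> carrier (G i)"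
    and inj: "\<And>x y. x \<in> carrier A \<Longrightarrow> y \<in> carrier A \<Longrightarrow> (\<And>i. i \<in> I \<Longrightarrow> h x i = h y i) \<Longrightarrow> x = y"
    and zero: "\<zero>\<^bsub>A\<^esub> \<in> carrier A" and one: "\<one>\<^bsub>A\<^esub> \<in> carrier A"
    and add: "\<And>x y. x \<in> carrier A \<Longrightarrow> y \<in> carrier A \<Longrightarrow> x \<oplus>\<^bsub>A\<^esub> y \<in> carrier A"
    and mult: "\<And>x y. x \<in> carrier A \<Longrightarrow> y \<in> carrier A \<Longrightarrow> x \<otimes>\<^bsub>A\<^esub> y \<in> carrier A"
    and h0: "\<And>i. i \<in> I \<Longrightarrow> h \<zero>\<^bsub>A\<^esub> i = \<zero>\<^bsub>G i\<^esub>"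
    and h1: "\<And>i. i \<in> I \<Longrightarrow> h \<one>\<^bsub>A\<^esub> i = \<one>\<^bsub>G i\<^esub>"
    and hadd: "\<And>x y i. x \<in> carrier A \<Longrightarrow> y \<in> carrier A \<Longrightarrow> i \<in> I \<Longrightarrow>
                 h (x \<oplus>\<^bsub>A\<^esub> y) i = h x i \<oplus>\<^bsub>G i\<^esub> h y i"
    and hmult: "\<And>x y i. x \<in> carrier A \<Longrightarrow> y \<in> carrier A \<Longrightarrow> i \<in> I \<Longrightarrow>
                  h (x \<otimes>\<^bsub>A\<^esub> y) i = h x i \<otimes>\<^bsub>G i\<^esub> h y i"
    and neg: "\<And>x. x \<in> carrier A \<Longrightarrow> \<exists>y\<in>carrier A. x \<oplus>\<^bsub>A\<^esub> y = \<zero>\<^bsub>A\<^esub>"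
  shows "cring A"
proof -
  note hom_simps = hc zero one add mult h0 h1 hadd hmult cring.cring_simprules[OF G]
  show ?thesis
  proof (rule cringI)
    show "abelian_group A"
    proof (rule abelian_groupI)
      fix x assume x: "x \<in> carrier A"
      obtain y where y: "y \<in> carrier A" "x \<oplus>\<^bsub>A\<^esub> y = \<zero>\<^bsub>A\<^esub>"
        using neg[OF x] by blast
      have "y \<oplus>\<^bsub>A\<^esub> x = \<zero>\<^bsub>A\<^esub>"
        by (rule inj) (use x y in \<open>simp_all add: hom_simps flip: y(2)\<close>)
      then show "\<exists>y\<in>carrier A. y \<oplus>\<^bsub>A\<^esub> x = \<zero>\<^bsub>A\<^esub>"
        using y(1) by blast
    qed (auto intro: inj simp: hom_simps)
    show "comm_monoid A"
      by (rule comm_monoidI) (auto intro: inj simp: hom_simps)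
  qed (auto intro: inj simp: hom_simps)
qed

lemma (in domain) nat_pow_eq_zero_imp_zero:
  assumes "x \<in> carrier R" "x [^] (n::nat) = \<zero>"
  shows "x = \<zero>"
  using assms(2)
proof (induction n)
  case (Suc n)
  then show ?case
    using assms(1) integral by auto
qed simp

lemma reduced_ring_if_injective_pointwise_hom:
  fixes A :: "('a, 'm) ring_scheme" and G :: "'i \<Rightarrow> ('f, 'n) ring_scheme"
  assumes G: "\<And>i. i \<in> I \<Longrightarrow> domain (G i)"
    and hc: "\<And>x i. x \<in> carrier A \<Longrightarrow> i \<in> I \<Longrightarrow> h x i \<in> carrier (G i)"
    and inj: "\<And>x y. x \<in> carrier A \<Longrightarrow> y \<in> carrier A \<Longrightarrow> (\<And>i. i \<in> I \<Longrightarrow> h x i = h y i) \<Longrightarrow> x = y"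
    and zero: "\<zero>\<^bsub>A\<^esub> \<in> carrier A" and one: "\<one>\<^bsub>A\<^esub> \<in> carrier A"
    and mult: "\<And>x y. x \<in> carrier A \<Longrightarrow> y \<in> carrier A \<Longrightarrow> x \<otimes>\<^bsub>A\<^esub> y \<in> carrier A"
    and h0: "\<And>i. i \<in> I \<Longrightarrow> h \<zero>\<^bsub>A\<^esub> i = \<zero>\<^bsub>G i\<^esub>"
    and h1: "\<And>i. i \<in> I \<Longrightarrow> h \<one>\<^bsub>A\<^esub> i = \<one>\<^bsub>G i\<^esub>"
    and hmult: "\<And>x y i. x \<in> carrier A \<Longrightarrow> y \<in> carrier A \<Longrightarrow> i \<in> I \<Longrightarrow>
                  h (x \<otimes>\<^bsub>A\<^esub> y) i = h x i \<otimes>\<^bsub>G i\<^esub> h y i"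
  shows "reduced_ring A"
  unfolding reduced_ring_def
proof (intro ballI allI impI)
  fix a and n :: nat assume a: "a \<in> carrier A" and an: "a [^]\<^bsub>A\<^esub> n = \<zero>\<^bsub>A\<^esub>"
  have pow: "a [^]\<^bsub>A\<^esub> n \<in> carrier A \<and> h (a [^]\<^bsub>A\<^esub> n) i = h a i [^]\<^bsub>G i\<^esub> n" if i: "i \<in> I" for i
    by (induction n) (simp_all add: a i one mult h1 hmult)
  show "a = \<zero>\<^bsub>A\<^esub>"
  proof (rule inj)
    fix i assume i: "i \<in> I"
    have "h a i [^]\<^bsub>G i\<^esub> n = \<zero>\<^bsub>G i\<^esub>"
      using pow[OF i] an h0[OF i] by simp
    then show "h a i = h \<zero>\<^bsub>A\<^esub> i"
      using domain.nat_pow_eq_zero_imp_zero[OF G[OF i] hc[OF a i]] h0[OF i] by simp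
  qed (use a zero in auto)
qed

lemma implicitly_closed_field_is_field: "implicitly_closed_field F \<Longrightarrow> field F"
  unfolding implicitly_closed_field_def weakly_rooted_def by blast

lemma embeds_into_productD:
  assumes "embeds_into_product A I F h"
  shows "\<And>x i. x \<in> carrier A \<Longrightarrow> i \<in> I \<Longrightarrow> h x i \<in> carrier (F i)"
    and "\<And>x y. x \<in> carrier A \<Longrightarrow> y \<in> carrier A \<Longrightarrow> (\<And>i. i \<in> I \<Longrightarrow> h x i = h y i) \<Longrightarrow> x = y"
    and "\<And>i. i \<in> I \<Longrightarrow> h \<zero>\<^bsub>A\<^esub> i = \<zero>\<^bsub>F i\<^esub>"
    and "\<And>i. i \<in> I \<Longrightarrow> h \<one>\<^bsub>A\<^esub> i = \<one>\<^bsub>F i\<^esub>"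
    and "\<And>x y i. x \<in> carrier A \<Longrightarrow> y \<in> carrier A \<Longrightarrow> i \<in> I \<Longrightarrow>
           h (x \<oplus>\<^bsub>A\<^esub> y) i = h x i \<oplus>\<^bsub>F i\<^esub> h y i"
    and "\<And>x y i. x \<in> carrier A \<Longrightarrow> y \<in> carrier A \<Longrightarrow> i \<in> I \<Longrightarrow>
           h (x \<otimes>\<^bsub>A\<^esub> y) i = h x i \<otimes>\<^bsub>F i\<^esub> h y i"
    and "\<And>x i. x \<in> carrier A \<Longrightarrow> i \<in> I \<Longrightarrow> h (neg A x) i = neg (F i) (h x i)"
proof -
  note emb = assms[unfolded embeds_into_product_def]
  show "h x i \<in> carrier (F i)" if "x \<in> carrier A" "i \<in> I" for x i
    using emb that by blast
  show "x = y" if "x \<in> carrier A" "y \<in> carrier A" "\<And>i. i \<in> I \<Longrightarrow> h x i = h y i" for x y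
  proof -
    have "h x = h y"
      using emb that by (intro PiE_ext[of _ I "\<lambda>i. carrier (F i)"]) blast+
    then show ?thesis
      using emb that by (meson inj_onD)
  qed
qed (use assms in \<open>auto simp: embeds_into_product_def\<close>)

lemma ICM_reduct_reduced_cring:
  fixes A :: "('a, 'm) icalg_scheme"
  assumes "ICM TYPE('i) TYPE('f) A"
  shows "cring (reduct A)" and "reduced_ring (reduct A)"
proof -
  obtain I :: "'i set" and F :: "'i \<Rightarrow> 'f icalg" and h where
    A: "is_icalg A" and F: "\<And>i. i \<in> I \<Longrightarrow> implicitly_closed_field (F i)"
    and emb: "embeds_into_product A I F h"
    using assms unfolding ICM_def by blast
  note hom = embeds_into_productD[OF emb]
  have field: "\<And>i. i \<in> I \<Longrightarrow> field (F i)"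
    using F implicitly_closed_field_is_field by blast
  then have cring: "\<And>i. i \<in> I \<Longrightarrow> cring (F i)"
    using fieldE(1) by blast
  have closed: "\<zero>\<^bsub>A\<^esub> \<in> carrier A" "\<one>\<^bsub>A\<^esub> \<in> carrier A"
    "\<And>x y. x \<in> carrier A \<Longrightarrow> y \<in> carrier A \<Longrightarrow> x \<oplus>\<^bsub>A\<^esub> y \<in> carrier A"
    "\<And>x y. x \<in> carrier A \<Longrightarrow> y \<in> carrier A \<Longrightarrow> x \<otimes>\<^bsub>A\<^esub> y \<in> carrier A"
    "\<And>x. x \<in> carrier A \<Longrightarrow> neg A x \<in> carrier A"
    using A unfolding is_icalg_def by auto
  have "\<exists>y\<in>carrier A. x \<oplus>\<^bsub>A\<^esub> y = \<zero>\<^bsub>A\<^esub>" if x: "x \<in> carrier A" for x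
  proof
    show "x \<oplus>\<^bsub>A\<^esub> neg A x = \<zero>\<^bsub>A\<^esub>"
    proof (rule hom(2))
      fix i assume i: "i \<in> I"
      have "neg (F i) (h x i) = \<ominus>\<^bsub>F i\<^esub> h x i"
        using F[OF i] hom(1)[OF x i] unfolding implicitly_closed_field_def by blast
      then show "h (x \<oplus>\<^bsub>A\<^esub> neg A x) i = h \<zero>\<^bsub>A\<^esub> i"
        using x i closed hom field.is_ring[OF field[OF i], THEN ring.is_abelian_group]
        by (simp add: abelian_group.r_neg)
    qed (use x closed in auto)
  qed (use x closed in auto)
  then show "cring (reduct A)"
    using cring closed hom
    by (intro cring_if_injective_pointwise_hom[where G = F and I = I and h = h]) auto
  show "reduced_ring (reduct A)"
    using field[THEN field.axioms(1)] closed hom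
    by (intro reduced_ring_if_injective_pointwise_hom[where G = F and I = I and h = h]) auto
qed

section \<open>Separating a nonzero element of a reduced ring by a field\<close>

lemma (in ring) exists_maximal_ideal_disjoint:
  assumes "ideal I R" "I \<inter> S = {}"
  obtains P where "ideal P R" "I \<subseteq> P" "P \<inter> S = {}"
    "\<And>J. ideal J R \<Longrightarrow> P \<subseteq> J \<Longrightarrow> J \<inter> S = {} \<Longrightarrow> J = P"
proof -
  let ?A = "{J. ideal J R \<and> I \<subseteq> J \<and> J \<inter> S = {}}"
  have "\<exists>P\<in>?A. \<forall>J\<in>?A. P \<subseteq> J \<longrightarrow> J = P"
  proof (rule subset_Zorn_nonempty)
    fix C assume C: "C \<noteq> {}" "subset.chain ?A C"
    then have "subset.chain {J. ideal J R} C"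
      unfolding subset_chain_def by blast
    then have "ideal (\<Union>C) R"
      using chain_Union_is_ideal[of C] C(1) by simp
    then show "\<Union>C \<in> ?A"
      using C unfolding subset_chain_def by blast
  qed (use assms in blast)
  then obtain P where P: "ideal P R" "I \<subseteq> P" "P \<inter> S = {}"
    and max: "\<forall>J\<in>?A. P \<subseteq> J \<longrightarrow> J = P"
    by auto
  show thesis
    by (rule that[OF P]) (use max P(2) in auto)
qed

lemma (in cring) exists_maximalideal:
  assumes "ideal I R" "\<one> \<notin> I"
  obtains M where "maximalideal M R" "I \<subseteq> M"
proof -
  obtain M where M: "ideal M R" "I \<subseteq> M" "M \<inter> {\<one>} = {}"
    and max: "\<And>J. ideal J R \<Longrightarrow> M \<subseteq> J \<Longrightarrow> J \<inter> {\<one>} = {} \<Longrightarrow> J = M"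
    by (rule exists_maximal_ideal_disjoint[OF assms(1), of "{\<one>}"]) (use assms(2) in auto)
  have "maximalideal M R"
  proof (rule maximalidealI[OF M(1)])
    show "carrier R \<noteq> M"
      using M(3) by blast
    show "J = M \<or> J = carrier R" if "ideal J R" "M \<subseteq> J" "J \<subseteq> carrier R" for J
      using max[OF that(1,2)] ideal.one_imp_carrier[OF that(1)] by blast
  qed
  then show thesis
    using M(2) by (rule that)
qed

lemma (in cring) primeideal_if_maximal_avoiding_powers:
  assumes a: "a \<in> carrier R" and P: "ideal P R" and avoid: "\<And>n::nat. a [^] n \<notin> P"
    and max: "\<And>J. ideal J R \<Longrightarrow> P \<subseteq> J \<Longrightarrow> (\<And>n::nat. a [^] n \<notin> J) \<Longrightarrow> J = P"
  shows "primeideal P R"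
proof (rule primeidealI[OF P is_cring])
  interpret P: ideal P R by fact
  show "carrier R \<noteq> P"
    using avoid[of 0] by auto
  have power_in_sum: "\<exists>n::nat. \<exists>p\<in>P. \<exists>r\<in>carrier R. a [^] n = p \<oplus> r \<otimes> z"
    if z: "z \<in> carrier R" "z \<notin> P" for z
  proof -
    have "P \<union> PIdl z \<subseteq> P <+>\<^bsub>R\<^esub> PIdl z"
      using genideal_self[of "P \<union> PIdl z"] P.Icarr ideal.Icarr[OF cgenideal_ideal[OF z(1)]]
      unfolding union_genideal[OF P cgenideal_ideal[OF z(1)]] by blast
    moreover have "z \<in> PIdl z"
      using cgenideal_self[OF z(1)] .
    ultimately obtain n :: nat where "a [^] n \<in> P <+>\<^bsub>R\<^esub> PIdl z"
      using max[OF add_ideals[OF P cgenideal_ideal[OF z(1)]]] z(2) by blast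
    then show ?thesis
      unfolding set_add_def' cgenideal_def by blast
  qed
  show "x \<in> P \<or> y \<in> P"
    if x: "x \<in> carrier R" and y: "y \<in> carrier R" and xy: "x \<otimes> y \<in> P" for x y
  proof (rule ccontr)
    assume "\<not> (x \<in> P \<or> y \<in> P)"
    then obtain m n :: nat and p q r s where
      pq: "p \<in> P" "q \<in> P" and rs: "r \<in> carrier R" "s \<in> carrier R"
      and am: "a [^] m = p \<oplus> r \<otimes> x" and an: "a [^] n = q \<oplus> s \<otimes> y"
      using power_in_sum[OF x] power_in_sum[OF y] by blast
    have pq_carrier: "p \<in> carrier R" "q \<in> carrier R"
      using pq P.Icarr by auto
    \<comment> \<open>every summand lies in \<open>P\<close>, the last one because \<open>x \<otimes> y \<in> P\<close>\<close>
    have "a [^] (m + n) = p \<otimes> (q \<oplus> s \<otimes> y) \<oplus> (r \<otimes> x \<otimes> q \<oplus> (r \<otimes> s) \<otimes> (x \<otimes> y))"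
      using a x y rs pq_carrier
      by (simp add: nat_pow_mult[symmetric] am an l_distr r_distr a_ac m_ac)
    also have "\<dots> \<in> P"
      using pq rs x y xy pq_carrier by (simp add: P.I_l_closed P.I_r_closed P.a_closed)
    finally show False
      using avoid by blast
  qed
qed

lemma (in cring) exists_primeideal_avoiding_non_nilpotent:
  assumes a: "a \<in> carrier R" and non_nilpotent: "\<And>n::nat. a [^] n \<noteq> \<zero>"
  obtains P where "primeideal P R" "a \<notin> P"
proof -
  let ?S = "range (\<lambda>n::nat. a [^] n)"
  obtain P where P: "ideal P R" "P \<inter> ?S = {}"
    and max: "\<And>J. ideal J R \<Longrightarrow> P \<subseteq> J \<Longrightarrow> J \<inter> ?S = {} \<Longrightarrow> J = P"
    by (rule exists_maximal_ideal_disjoint[OF zeroideal, of ?S])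
      (use non_nilpotent in \<open>auto simp: eq_commute[of \<zero>]\<close>)
  have avoid: "\<And>n::nat. a [^] n \<notin> P"
    using P(2) by blast
  have "primeideal P R"
  proof (rule primeideal_if_maximal_avoiding_powers[OF a P(1) avoid])
    show "J = P" if "ideal J R" "P \<subseteq> J" "\<And>n::nat. a [^] n \<notin> J" for J
      using max[OF that(1,2)] that(3) by blast
  qed
  moreover have "a \<notin> P"
    using avoid[of 1] a by simp
  ultimately show thesis
    by (rule that)
qed

lemma (in domain) exists_maximalideal_poly_avoiding_const:
  assumes d: "d \<in> carrier R" "d \<noteq> \<zero>"
  obtains M where "maximalideal M (poly_ring R)" "[d] \<notin> M"
proof -
  let ?U = "poly_ring R"
  interpret U: domain ?U
    by (rule univ_poly_is_domain[OF carrier_is_subring])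
  define q where "q = [d, \<ominus> \<one>]"
  have q: "q \<in> carrier ?U"
    unfolding q_def sym[OF univ_poly_carrier] polynomial_def using d by auto
  have unit_free: "\<one>\<^bsub>?U\<^esub> \<notin> PIdl\<^bsub>?U\<^esub> q"
  proof
    assume "\<one>\<^bsub>?U\<^esub> \<in> PIdl\<^bsub>?U\<^esub> q"
    then have "q \<in> Units ?U"
      unfolding cgenideal_def Units_def using q U.m_comm by auto
    then show False
      using univ_poly_carrier_units_incl unfolding q_def by auto
  qed
  obtain M where M: "maximalideal M ?U" "PIdl\<^bsub>?U\<^esub> q \<subseteq> M"
    by (rule U.exists_maximalideal[OF U.cgenideal_ideal[OF q] unit_free])
  interpret M: maximalideal M ?U
    by (rule M(1))
  \<comment> \<open>\<open>q = d X - 1 \<in> M\<close>, so \<open>[d] \<in> M\<close> would give \<open>\<one> = [d] X - q \<in> M\<close>.\<close>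
  have "[d] \<notin> M"
  proof
    assume "[d] \<in> M"
    have X: "X \<in> carrier ?U"
      by (rule var_closed(1)[OF carrier_is_subring])
    have "[d] \<otimes>\<^bsub>?U\<^esub> X = q \<oplus>\<^bsub>?U\<^esub> \<one>\<^bsub>?U\<^esub>"
      using d unfolding q_def var_def univ_poly_mult univ_poly_add univ_poly_one
      by (simp add: l_neg)
    then have "[d] \<otimes>\<^bsub>?U\<^esub> X \<ominus>\<^bsub>?U\<^esub> q = (\<one>\<^bsub>?U\<^esub> \<oplus>\<^bsub>?U\<^esub> q) \<ominus>\<^bsub>?U\<^esub> q"
      using q U.a_comm by simp
    also have "\<dots> = \<one>\<^bsub>?U\<^esub>"
      using q by (simp add: U.minus_eq U.a_assoc U.r_neg)
    finally have "\<one>\<^bsub>?U\<^esub> = [d] \<otimes>\<^bsub>?U\<^esub> X \<ominus>\<^bsub>?U\<^esub> q" ..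
    also have "\<dots> \<in> M"
      using \<open>[d] \<in> M\<close> M(2) U.cgenideal_self[OF q] X M.I_r_closed M.a_closed M.a_inv_closed
      unfolding U.minus_eq by blast
    finally show False
      using M.I_notcarr M.one_imp_carrier by blast
  qed
  with M(1) show thesis
    by (rule that)
qed

lemma (in ideal) rcos_eq_quotient_zero_iff:
  "x \<in> carrier R \<Longrightarrow> I +> x = \<zero>\<^bsub>R Quot I\<^esub> \<longleftrightarrow> x \<in> I"
  unfolding FactRing_def using a_rcos_self a_rcos_const by auto

lemma inj_on_some_elem:
  assumes "pairwise disjnt \<A>" "{} \<notin> \<A>"
  shows "inj_on (\<lambda>C. SOME x. x \<in> C) \<A>"
proof (rule inj_onI)
  have some_elem: "(SOME x. x \<in> E) \<in> E" if "E \<in> \<A>" for E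
    using that assms(2) some_in_eq by metis
  fix C D assume C: "C \<in> \<A>" and D: "D \<in> \<A>" and eq: "(SOME x. x \<in> C) = (SOME x. x \<in> D)"
  then have "\<not> disjnt C D"
    using some_elem[OF C] some_elem[OF D] unfolding disjnt_def by auto
  then show "C = D"
    using assms(1) C D unfolding pairwise_def by blast
qed

lemma (in ideal) quotient_some_elem:
  shows "inj_on (\<lambda>C. SOME x. x \<in> C) (carrier (R Quot I))"
    and "C \<in> carrier (R Quot I) \<Longrightarrow> (SOME x. x \<in> C) \<in> carrier R"
proof -
  have cosets: "carrier (R Quot I) = a_rcosets I"
    unfolding FactRing_def by simp
  have nonempty: "{} \<notin> a_rcosets I"
    using a_rcos_self unfolding A_RCOSETS_def' by blast
  show "inj_on (\<lambda>C. SOME x. x \<in> C) (carrier (R Quot I))"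
    unfolding cosets by (rule inj_on_some_elem[OF a_rcos_disjoint nonempty])
  show "(SOME x. x \<in> C) \<in> carrier R" if C: "C \<in> carrier (R Quot I)"
  proof -
    have "(SOME x. x \<in> C) \<in> C"
      using C nonempty some_in_eq unfolding cosets by metis
    then show ?thesis
      using C a_rcosets_part_G unfolding cosets by blast
  qed
qed

lemma inj_on_poly_quotient_reps:
  assumes P: "ideal P R" and M: "ideal M (poly_ring (R Quot P))"
  shows "inj_on (map (\<lambda>C. SOME x. x \<in> C) \<circ> (\<lambda>C. SOME x. x \<in> C))
           (carrier (poly_ring (R Quot P) Quot M))"
proof (rule comp_inj_on)
  interpret D: ring "R Quot P"
    by (rule ideal.quotient_is_ring[OF P])
  show "inj_on (\<lambda>C. SOME x. x \<in> C) (carrier (poly_ring (R Quot P) Quot M))"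
    by (rule ideal.quotient_some_elem(1)[OF M])
  have "(\<lambda>C. SOME x. x \<in> C) ` carrier (poly_ring (R Quot P) Quot M) \<subseteq> lists (carrier (R Quot P))"
    using ideal.quotient_some_elem(2)[OF M] D.polynomial_incl unfolding sym[OF univ_poly_carrier]
    by blast
  moreover have "inj_on (map (\<lambda>C. SOME x. x \<in> C)) (lists (carrier (R Quot P)))"
    using ideal.quotient_some_elem(1)[OF P] by (rule inj_on_map_lists)
  ultimately show "inj_on (map (\<lambda>C. SOME x. x \<in> C))
      ((\<lambda>C. SOME x. x \<in> C) ` carrier (poly_ring (R Quot P) Quot M))"
    by (rule inj_on_subset[rotated])
qed

lemma reduced_cring_field_hom_nonzero:
  fixes R :: "('b, 'm) ring_scheme"
  assumes R: "cring R" "reduced_ring R" and a: "a \<in> carrier R" "a \<noteq> \<zero>\<^bsub>R\<^esub>"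
  obtains K :: "'b set list set ring" and \<phi> and code :: "'b set list set \<Rightarrow> 'b list"
  where "field K" "\<phi> \<in> ring_hom R K" "\<phi> a \<noteq> \<zero>\<^bsub>K\<^esub>" "inj_on code (carrier K)"
proof -
  interpret R: cring R by (rule R(1))
  have "\<And>n::nat. a [^]\<^bsub>R\<^esub> n \<noteq> \<zero>\<^bsub>R\<^esub>"
    using R(2) a unfolding reduced_ring_def by blast
  then obtain P where "primeideal P R" "a \<notin> P"
    by (rule R.exists_primeideal_avoiding_non_nilpotent[OF a(1)])
  interpret P: primeideal P R by fact
  define D where "D = R Quot P"
  interpret D: domain D
    unfolding D_def by (rule P.quotient_is_domain)
  have a_coset: "P +>\<^bsub>R\<^esub> a \<in> carrier D" "P +>\<^bsub>R\<^esub> a \<noteq> \<zero>\<^bsub>D\<^esub>"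
    using P.rcos_eq_quotient_zero_iff \<open>a \<notin> P\<close> a(1) ring_hom_memE(1)[OF P.rcos_ring_hom]
    unfolding D_def by auto
  then obtain M where "maximalideal M (poly_ring D)" "[P +>\<^bsub>R\<^esub> a] \<notin> M"
    by (rule D.exists_maximalideal_poly_avoiding_const)
  interpret M: maximalideal M "poly_ring D" by fact
  define K where "K = poly_ring D Quot M"
  have "field K"
    unfolding K_def by (rule M.quotient_is_field[OF D.univ_poly_is_cring[OF D.carrier_is_subring]])
  define \<phi> where "\<phi> = (+>\<^bsub>poly_ring D\<^esub>) M \<circ> D.poly_of_const \<circ> (+>\<^bsub>R\<^esub>) P"
  have "\<phi> \<in> ring_hom R K"
    using D.canonical_embedding_is_hom[OF D.carrier_is_subring] P.rcos_ring_hom M.rcos_ring_hom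
    unfolding \<phi>_def K_def D_def by (simp add: ring_hom_trans)
  moreover have "\<phi> a \<noteq> \<zero>\<^bsub>K\<^esub>"
  proof -
    have "[P +>\<^bsub>R\<^esub> a] \<in> carrier (poly_ring D)"
      using a_coset unfolding sym[OF univ_poly_carrier] polynomial_def by simp
    then show ?thesis
      using M.rcos_eq_quotient_zero_iff a_coset \<open>[P +>\<^bsub>R\<^esub> a] \<notin> M\<close>
      unfolding \<phi>_def K_def D.poly_of_const_def by simp
  qed
  moreover have "inj_on (map (\<lambda>C. SOME x. x \<in> C) \<circ> (\<lambda>C. SOME x. x \<in> C)) (carrier K)"
    unfolding K_def D_def by (rule inj_on_poly_quotient_reps[OF P.is_ideal M.is_ideal[unfolded D_def]])
  ultimately show thesis
    by (rule that[OF \<open>field K\<close>])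
qed

section \<open>Injective codes\<close>

definition nat_list_encode :: "nat \<times> 'b list \<Rightarrow> 'b list" where
  "nat_list_encode = (\<lambda>(n, xs). xs @ replicate (prod_encode (n, length xs) - length xs) undefined)"

lemma length_nat_list_encode: "length (nat_list_encode (n, xs)) = prod_encode (n, length xs)"
  unfolding nat_list_encode_def using le_prod_encode_2[of "length xs" n] by simp

\<comment> \<open>The length alone determines \<open>n\<close> and \<open>length xs\<close>, so this works even if \<open>'b\<close> has
  just one element.\<close>
lemma inj_nat_list_encode: "inj nat_list_encode"
proof (rule injI, clarify)
  fix n m :: nat and xs ys :: "'b list"
  assume eq: "nat_list_encode (n, xs) = nat_list_encode (m, ys)"
  then have "prod_encode (n, length xs) = prod_encode (m, length ys)"
    by (metis length_nat_list_encode)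
  then have "n = m" "length xs = length ys"
    using inj_prod_encode[of UNIV] unfolding inj_on_def by blast+
  moreover have "take (length xs) (nat_list_encode (n, xs)) = xs"
    "take (length ys) (nat_list_encode (m, ys)) = ys"
    unfolding nat_list_encode_def by simp_all
  ultimately show "n = m \<and> xs = ys"
    using eq by metis
qed

definition list_pair_encode :: "'b list \<times> 'b list \<Rightarrow> 'b list" where
  "list_pair_encode = (\<lambda>(xs, ys). nat_list_encode (length xs, xs @ ys))"

lemma inj_list_pair_encode: "inj list_pair_encode"
  unfolding list_pair_encode_def by (auto intro!: injI dest!: injD[OF inj_nat_list_encode])

fun list_list_encode :: "'b list list \<Rightarrow> 'b list" where
  "list_list_encode [] = nat_list_encode (0, [])"
| "list_list_encode (xs # xss) = nat_list_encode (1, list_pair_encode (xs, list_list_encode xss))"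

lemma inj_list_list_encode: "inj list_list_encode"
proof (rule injI)
  show "xss = yss" if "list_list_encode xss = list_list_encode yss" for xss yss :: "'b list list"
    using that
  proof (induction xss arbitrary: yss)
    case Nil
    then show ?case
      by (cases yss) (auto dest: injD[OF inj_nat_list_encode])
  next
    case (Cons xs xss)
    then show ?case
      by (cases yss) (auto dest!: injD[OF inj_nat_list_encode] injD[OF inj_list_pair_encode])
  qed
qed

\<comment> \<open>An element is determined by a nonzero polynomial over \<open>K\<close> vanishing at it together with its
  position in an enumeration of the finitely many roots of that polynomial.\<close>
lemma (in domain) exists_root_code:
  assumes K: "subring K R" and algebraic: "\<And>x. x \<in> carrier R \<Longrightarrow> (algebraic over K) x"
  obtains code :: "'a \<Rightarrow> 'a list \<times> nat"
  where "inj_on code (carrier R)" "\<And>x. x \<in> carrier R \<Longrightarrow> set (fst (code x)) \<subseteq> K"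
proof -
  define pol where "pol x = (SOME p. p \<in> carrier (K[X]) \<and> p \<noteq> [] \<and> eval p x = \<zero>)" for x
  have pol: "pol x \<in> carrier (K[X]) \<and> pol x \<noteq> [] \<and> eval (pol x) x = \<zero>"
    if x: "x \<in> carrier R" for x
  proof -
    obtain p where "p \<in> carrier (K[X])" "p \<noteq> []" "eval p x = \<zero>"
      by (rule algebraicE[OF K x algebraic[OF x]])
    then show ?thesis
      unfolding pol_def by (intro someI_ex[of "\<lambda>p. p \<in> carrier (K[X]) \<and> p \<noteq> [] \<and> eval p x = \<zero>"])
        blast
  qed
  define index where "index p = (SOME f :: 'a \<Rightarrow> nat. inj_on f {y. is_root p y})" for p
  have index: "inj_on (index (pol x)) {y. is_root (pol x) y}" if x: "x \<in> carrier R" for x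
  proof -
    have "pol x \<in> carrier (poly_ring R)"
      using pol[OF x] carrier_polynomial[OF K] unfolding sym[OF univ_poly_carrier] by blast
    then have "finite {y. is_root (pol x) y}"
      by (rule finite_number_of_roots)
    then have "\<exists>f :: 'a \<Rightarrow> nat. inj_on f {y. is_root (pol x) y}"
      using finite_imp_inj_to_nat_seg by blast
    then show ?thesis
      unfolding index_def by (rule someI_ex)
  qed
  have root: "is_root (pol x) x" if "x \<in> carrier R" for x
    using pol[OF that] that unfolding is_root_def by blast
  show thesis
  proof (rule that[of "\<lambda>x. (pol x, index (pol x) x)"])
    show "inj_on (\<lambda>x. (pol x, index (pol x) x)) (carrier R)"
    proof (rule inj_onI)
      fix x y assume x: "x \<in> carrier R" and y: "y \<in> carrier R"
        and eq: "(pol x, index (pol x) x) = (pol y, index (pol y) y)"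
      have same: "pol y = pol x"
        using eq by simp
      have "index (pol x) x = index (pol x) y"
        using eq unfolding same by simp
      then show "x = y"
        using inj_onD[OF index[OF x]] root[OF x] root[OF y] same by simp
    qed
    show "set (fst (pol x, index (pol x) x)) \<subseteq> K" if "x \<in> carrier R" for x
      using pol[OF that] polynomial_incl unfolding sym[OF univ_poly_carrier] by simp
  qed
qed

section \<open>Implicitly closed fields\<close>

lemma (in algebraically_closed) exists_nth_root:
  assumes "n > 0" "a \<in> carrier L"
  shows "\<exists>b\<in>carrier L. b [^] (n::nat) = a"
proof -
  \<comment> \<open>the coefficient list of \<open>X^n - a\<close>, highest degree first\<close>
  define p where "p = monom \<one> (n - 1) @ [\<ominus> a]"
  have "set p \<subseteq> carrier L" "length p = n + 1" "hd p = \<one>"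
    unfolding p_def monom_def using assms by auto
  then have p: "p \<in> carrier (poly_ring L)"
    unfolding sym[OF univ_poly_carrier] polynomial_def by auto
  have "size (roots p) = n"
    using roots_over_carrier[OF p] \<open>length p = n + 1\<close> unfolding splitted_def by simp
  then have "roots p \<noteq> {#}"
    using assms(1) by auto
  then obtain b where "b \<in># roots p"
    by blast
  then have b: "b \<in> carrier L" "eval p b = \<zero>"
    using roots_mem_iff_is_root[OF p] unfolding is_root_def by auto
  have "eval p b = eval (monom \<one> (n - 1)) b \<otimes> b [^] (1::nat) \<oplus> eval [\<ominus> a] b"
    unfolding p_def using eval_append[OF monom_in_carrier _ b(1), of \<one> "[\<ominus> a]"] assms(2)
    by simp
  also have "\<dots> = b [^] (n - 1) \<otimes> b \<oplus> \<ominus> a"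
    using eval_monom[OF one_closed b(1)] b(1) assms(2) by simp
  also have "b [^] (n - 1) \<otimes> b = b [^] n"
    using assms(1) nat_pow_Suc[of b "n - 1"] by simp
  finally have "b [^] n \<oplus> \<ominus> a = \<zero>"
    using b(2) by simp
  then have "b [^] n = a"
    using r_right_minus_eq[of "b [^] n" a] b(1) assms(2) unfolding minus_eq by simp
  with b(1) show ?thesis
    by blast
qed

lemma (in ring) add_pow_one_mult:
  "add_pow R (m * k) \<one> = add_pow R (m::nat) \<one> \<otimes> add_pow R (k::nat) \<one>"
  by (simp add: add_pow_ldistr add.nat_pow_pow mult.commute)

lemma (in domain) ring_char_prime:
  assumes "ring_char R \<noteq> 0"
  shows "Factorial_Ring.prime (ring_char R)"
proof -
  let ?P = "\<lambda>n::nat. n > 0 \<and> add_pow R n \<one> = \<zero>"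
  have ex: "\<exists>n. ?P n"
    using assms unfolding ring_char_def by presburger
  then have char: "ring_char R = (LEAST n. ?P n)"
    unfolding ring_char_def by simp
  have char_P: "?P (ring_char R)"
    unfolding char by (rule LeastI_ex[OF ex])
  have char_min: "ring_char R \<le> m" if "?P m" for m
    unfolding char using that by (rule Least_le)
  have "ring_char R \<noteq> 1"
    using char_P by auto
  moreover have "m = 1 \<or> m = ring_char R" if "m dvd ring_char R" for m
  proof -
    obtain k where k: "ring_char R = m * k"
      using \<open>m dvd ring_char R\<close> by blast
    then have "m > 0" "k > 0"
      using char_P by auto
    have "add_pow R m \<one> \<otimes> add_pow R k \<one> = \<zero>"
      using char_P k add_pow_one_mult by simp
    then have "add_pow R m \<one> = \<zero> \<or> add_pow R k \<one> = \<zero>"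
      using integral by simp
    then show ?thesis
    proof
      assume "add_pow R m \<one> = \<zero>"
      then have "ring_char R \<le> m"
        using char_min \<open>m > 0\<close> by blast
      then show ?thesis
        using dvd_imp_le[OF \<open>m dvd ring_char R\<close>] char_P by simp
    next
      assume "add_pow R k \<one> = \<zero>"
      then have "ring_char R \<le> k"
        using char_min \<open>k > 0\<close> by blast
      then have "k = ring_char R"
        using dvd_imp_le[of k "ring_char R"] k char_P by auto
      then show ?thesis
        using k char_P by simp
    qed
  qed
  ultimately show ?thesis
    using char_P unfolding prime_nat_iff by auto
qed

definition nth_root_closed :: "('a, 'm) ring_scheme \<Rightarrow> bool" where
  "nth_root_closed F \<longleftrightarrow> (\<forall>n::nat. n > 0 \<longrightarrow> (\<forall>a\<in>carrier F. \<exists>b\<in>carrier F. b [^]\<^bsub>F\<^esub> n = a))"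

lemma weakly_rooted_if_nth_root_closed:
  assumes "field F" "nth_root_closed F"
  shows "weakly_rooted F"
  using assms domain.ring_char_prime[OF field.axioms(1)[OF assms(1)]] prime_gt_0_nat
  unfolding weakly_rooted_def nth_root_closed_def by blast

lemma (in algebraically_closed) nth_root_closed: "nth_root_closed L"
  unfolding nth_root_closed_def using exists_nth_root by blast

lemma ring_iso_nth_root_closed:
  assumes "h \<in> ring_iso R S" "ring R" "ring S" "nth_root_closed R"
  shows "nth_root_closed S"
  unfolding nth_root_closed_def
proof (intro allI impI ballI)
  have hom: "h \<in> ring_hom R S"
    using assms(1) unfolding ring_iso_def by blast
  fix n :: nat and a assume "n > 0" "a \<in> carrier S"
  then obtain x where x: "x \<in> carrier R" "a = h x"
    using assms(1) unfolding ring_iso_def bij_betw_def by auto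
  then obtain b where "b \<in> carrier R" "b [^]\<^bsub>R\<^esub> n = x"
    using assms(4) \<open>n > 0\<close> unfolding nth_root_closed_def by blast
  then show "\<exists>b\<in>carrier S. b [^]\<^bsub>S\<^esub> n = a"
    using ring_hom_ring.hom_nat_pow[OF ring_hom_ringI2[OF assms(2,3) hom]]
      ring_hom_memE(1)[OF hom] x by metis
qed

definition icalg_of_field :: "('a, 'm) ring_scheme \<Rightarrow> 'a icalg" where
  "icalg_of_field K =
     \<lparr>carrier = carrier K, monoid.mult = monoid.mult K, one = \<one>\<^bsub>K\<^esub>,
      ring.zero = \<zero>\<^bsub>K\<^esub>, ring.add = ring.add K,
      neg = a_inv K, winv = (\<lambda>a. if a = \<zero>\<^bsub>K\<^esub> then \<zero>\<^bsub>K\<^esub> else inv\<^bsub>K\<^esub> a),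
      wroot = (\<lambda>p a. if ring_char K = p then SOME b. b \<in> carrier K \<and> b [^]\<^bsub>K\<^esub> p = a
                      else \<zero>\<^bsub>K\<^esub>)\<rparr>"

lemma icalg_of_field_simps [simp]:
  "carrier (icalg_of_field K) = carrier K"
  "x \<otimes>\<^bsub>icalg_of_field K\<^esub> y = x \<otimes>\<^bsub>K\<^esub> y" "x \<oplus>\<^bsub>icalg_of_field K\<^esub> y = x \<oplus>\<^bsub>K\<^esub> y"
  "\<one>\<^bsub>icalg_of_field K\<^esub> = \<one>\<^bsub>K\<^esub>" "\<zero>\<^bsub>icalg_of_field K\<^esub> = \<zero>\<^bsub>K\<^esub>"
  by (simp_all add: icalg_of_field_def)

lemma icalg_of_field_derived_ops:
  "add_pow (icalg_of_field K) (n::nat) x = add_pow K n x"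
  "x [^]\<^bsub>icalg_of_field K\<^esub> (n::nat) = x [^]\<^bsub>K\<^esub> n"
  "inv\<^bsub>icalg_of_field K\<^esub> x = inv\<^bsub>K\<^esub> x"
  "\<ominus>\<^bsub>icalg_of_field K\<^esub> x = \<ominus>\<^bsub>K\<^esub> x"
  by (simp_all add: icalg_of_field_def nat_pow_def m_inv_def add_pow_def a_inv_def)

lemma ring_char_icalg_of_field: "ring_char (icalg_of_field K) = ring_char K"
  unfolding ring_char_def icalg_of_field_derived_ops icalg_of_field_simps ..

lemma field_icalg_of_field:
  assumes "field K"
  shows "field (icalg_of_field K)"
proof -
  have "id \<in> ring_iso K (icalg_of_field K)"
    unfolding ring_iso_def ring_hom_def by simp
  then have "field ((icalg_of_field K)\<lparr>zero := \<zero>\<^bsub>K\<^esub>\<rparr>)"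
    using field.ring_iso_imp_img_field[OF assms] by fastforce
  moreover have "(icalg_of_field K)\<lparr>zero := \<zero>\<^bsub>K\<^esub>\<rparr> = icalg_of_field K"
    unfolding icalg_of_field_def by simp
  ultimately show ?thesis
    by simp
qed

lemma implicitly_closed_field_icalg_of_field:
  assumes "weakly_rooted K"
  shows "implicitly_closed_field (icalg_of_field K)"
proof -
  have "field K"
    using assms unfolding weakly_rooted_def by blast
  have "weakly_rooted (icalg_of_field K)"
    using assms field_icalg_of_field[OF \<open>field K\<close>]
    unfolding weakly_rooted_def ring_char_icalg_of_field icalg_of_field_derived_ops
      icalg_of_field_simps by blast
  moreover have
    "wroot (icalg_of_field K) p a \<in> carrier K \<and> wroot (icalg_of_field K) p a [^]\<^bsub>K\<^esub> p = a"
    if "Factorial_Ring.prime p" "a \<in> carrier K" "ring_char K = p" for p a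
  proof -
    have "\<exists>b. b \<in> carrier K \<and> b [^]\<^bsub>K\<^esub> p = a"
      using assms that not_prime_0 unfolding weakly_rooted_def by metis
    then show ?thesis
      using that(3) unfolding icalg_of_field_def
      by (simp add: someI_ex[of "\<lambda>b. b \<in> carrier K \<and> b [^]\<^bsub>K\<^esub> p = a"])
  qed
  ultimately show ?thesis
    unfolding implicitly_closed_field_def ring_char_icalg_of_field icalg_of_field_derived_ops
    by (auto simp: icalg_of_field_def)
qed

lemma ring_hom_icalg_of_field [simp]: "ring_hom R (icalg_of_field K) = ring_hom R K"
  unfolding ring_hom_def icalg_of_field_simps ..

lemma field_hom_nonzero:
  assumes "h \<in> ring_hom A B" "field A" "field B" "x \<in> carrier A" "x \<noteq> \<zero>\<^bsub>A\<^esub>"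
  shows "h x \<noteq> \<zero>\<^bsub>B\<^esub>"
proof
  assume "h x = \<zero>\<^bsub>B\<^esub>"
  also have "\<zero>\<^bsub>B\<^esub> = h \<zero>\<^bsub>A\<^esub>"
    using ring_hom_zero[OF assms(1) field.is_ring[OF assms(2)] field.is_ring[OF assms(3)]] by simp
  finally have "x = \<zero>\<^bsub>A\<^esub>"
    using inj_onD[OF non_trivial_field_hom_is_inj[OF assms(1-3)]] assms(4)
      ring.ring_simprules(2)[OF field.is_ring[OF assms(2)]] by blast
  with assms(5) show False ..
qed

lemma field_extension_nth_root_closed_coded:
  fixes K :: "('k, 'm) ring_scheme" and code :: "'k \<Rightarrow> 'b list"
  assumes "field K" "inj_on code (carrier K)"
  obtains L :: "(('k list \<times> nat) multiset \<Rightarrow> 'k) ring" and \<psi> and code' :: "_ \<Rightarrow> 'b list"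
  where "field L" "nth_root_closed L" "\<psi> \<in> ring_hom K L" "inj_on code' (carrier L)"
proof -
  interpret K: field K by fact
  let ?\<iota> = "K.indexed_const :: 'k \<Rightarrow> ('k list \<times> nat) multiset \<Rightarrow> 'k"
  let ?K' = "?\<iota> ` carrier K"
  interpret L: algebraic_closure K.alg_closure ?K'
    by (rule K.alg_closureE(1))
  obtain root_code :: "_ \<Rightarrow> _ \<times> nat"
    where root_code: "inj_on root_code (carrier K.alg_closure)"
      "\<And>x. x \<in> carrier K.alg_closure \<Longrightarrow> set (fst (root_code x)) \<subseteq> ?K'"
    by (rule L.exists_root_code[OF subfieldE(1)[OF L.subfield_axioms] L.algebraic_extension]) blast+
  define coeff_code where "coeff_code = code \<circ> inv_into (carrier K) ?\<iota>"
  have "inj_on coeff_code ?K'"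
    unfolding coeff_code_def using inv_into_into[of _ ?\<iota> "carrier K"]
    by (intro comp_inj_on inj_on_inv_into inj_on_subset[OF assms(2)]) auto
  then have map_inj: "inj_on (map coeff_code) (lists ?K')"
    by (rule inj_on_map_lists)
  define pack where "pack c = nat_list_encode (snd c, list_list_encode (map coeff_code (fst c)))"
    for c :: "_ list \<times> nat"
  have "inj_on pack (root_code ` carrier K.alg_closure)"
  proof (rule inj_onI)
    fix c d assume c: "c \<in> root_code ` carrier K.alg_closure"
      and d: "d \<in> root_code ` carrier K.alg_closure" and "pack c = pack d"
    then have "snd c = snd d" "map coeff_code (fst c) = map coeff_code (fst d)"
      unfolding pack_def by (auto dest!: injD[OF inj_nat_list_encode] injD[OF inj_list_list_encode])
    moreover have "fst c \<in> lists ?K'" "fst d \<in> lists ?K'"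
      using c d root_code(2) by auto
    ultimately show "c = d"
      using inj_onD[OF map_inj] by (simp add: prod_eq_iff)
  qed
  then have "inj_on (pack \<circ> root_code) (carrier K.alg_closure)"
    by (rule comp_inj_on[OF root_code(1)])
  then show thesis
    by (rule that[OF L.field_axioms L.nth_root_closed K.alg_closureE(2)])
qed

lemma reduced_cring_implicitly_closed_field_hom_nonzero:
  fixes R :: "('b, 'm) ring_scheme"
  assumes "cring R" "reduced_ring R" "a \<in> carrier R" "a \<noteq> \<zero>\<^bsub>R\<^esub>"
  obtains F :: "'b list set icalg" and \<chi>
  where "implicitly_closed_field F" "\<chi> \<in> ring_hom R F" "\<chi> a \<noteq> \<zero>\<^bsub>F\<^esub>"
proof -
  obtain K :: "'b set list set ring" and \<phi> and code :: "_ \<Rightarrow> 'b list"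
    where K: "field K" "\<phi> \<in> ring_hom R K" "\<phi> a \<noteq> \<zero>\<^bsub>K\<^esub>" "inj_on code (carrier K)"
    by (rule reduced_cring_field_hom_nonzero[OF assms])
  obtain L :: "(('b set list set list \<times> nat) multiset \<Rightarrow> 'b set list set) ring"
    and \<psi> and code' :: "_ \<Rightarrow> 'b list"
    where L: "field L" "nth_root_closed L" "\<psi> \<in> ring_hom K L" "inj_on code' (carrier L)"
    by (rule field_extension_nth_root_closed_coded[OF K(1,4)])
  define f where "f x = {code' x}" for x
  have "inj_on f (carrier L)"
    using L(4) unfolding f_def inj_on_def by blast
  then have iso: "f \<in> ring_iso L (image_ring f L)" and field: "field (image_ring f L)"
    using inj_imp_image_ring_iso field.inj_imp_image_ring_is_field[OF L(1)] by blast+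
  have f_hom: "f \<in> ring_hom L (image_ring f L)"
    using iso unfolding ring_iso_def by blast
  have "weakly_rooted (image_ring f L)"
    using ring_iso_nth_root_closed[OF iso field.is_ring[OF L(1)] field.is_ring[OF field] L(2)]
    by (rule weakly_rooted_if_nth_root_closed[OF field])
  then have "implicitly_closed_field (icalg_of_field (image_ring f L))"
    by (rule implicitly_closed_field_icalg_of_field)
  moreover have "f \<circ> \<psi> \<circ> \<phi> \<in> ring_hom R (icalg_of_field (image_ring f L))"
    using ring_hom_trans[OF ring_hom_trans[OF K(2) L(3)] f_hom] by (simp add: comp_assoc)
  moreover have "(f \<circ> \<psi> \<circ> \<phi>) a \<noteq> \<zero>\<^bsub>icalg_of_field (image_ring f L)\<^esub>"
  proof -
    have "\<phi> a \<in> carrier K" "\<psi> (\<phi> a) \<in> carrier L"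
      using ring_hom_memE(1)[OF K(2) assms(3)] ring_hom_memE(1)[OF L(3)] by blast+
    then show ?thesis
      using field_hom_nonzero[OF f_hom L(1) field] field_hom_nonzero[OF L(3) K(1) L(1)] K(3) by simp
  qed
  ultimately show thesis
    by (rule that)
qed

section \<open>Products of implicitly closed fields\<close>

lemma implicitly_closed_field_closed:
  assumes "implicitly_closed_field F" "u \<in> carrier F"
  shows "neg F u \<in> carrier F" "winv F u \<in> carrier F"
    and "Factorial_Ring.prime (p::nat) \<Longrightarrow> wroot F p u \<in> carrier F"
proof -
  interpret field F
    using assms(1) by (rule implicitly_closed_field_is_field)
  show "neg F u \<in> carrier F"
    using assms unfolding implicitly_closed_field_def by simp
  show "winv F u \<in> carrier F"
    using assms field_Units unfolding implicitly_closed_field_def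
    by (cases "u = \<zero>\<^bsub>F\<^esub>") auto
  show "wroot F p u \<in> carrier F" if "Factorial_Ring.prime p"
    using assms that unfolding implicitly_closed_field_def by (cases "ring_char F = p") auto
qed

definition icalg_product :: "'i set \<Rightarrow> ('i \<Rightarrow> ('f, 'n) icalg_scheme) \<Rightarrow> ('i \<Rightarrow> 'f) icalg" where
  "icalg_product I F =
     \<lparr>carrier = \<Pi>\<^sub>E i\<in>I. carrier (F i),
      monoid.mult = (\<lambda>x y. \<lambda>i\<in>I. x i \<otimes>\<^bsub>F i\<^esub> y i), one = (\<lambda>i\<in>I. \<one>\<^bsub>F i\<^esub>),
      ring.zero = (\<lambda>i\<in>I. \<zero>\<^bsub>F i\<^esub>), ring.add = (\<lambda>x y. \<lambda>i\<in>I. x i \<oplus>\<^bsub>F i\<^esub> y i),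
      neg = (\<lambda>x. \<lambda>i\<in>I. neg (F i) (x i)), winv = (\<lambda>x. \<lambda>i\<in>I. winv (F i) (x i)),
      wroot = (\<lambda>p x. \<lambda>i\<in>I. wroot (F i) p (x i))\<rparr>"

lemma ICM_icalg_product:
  fixes F :: "'i \<Rightarrow> 'f icalg"
  assumes F: "\<And>i. i \<in> I \<Longrightarrow> implicitly_closed_field (F i)"
  shows "ICM TYPE('i) TYPE('f) (icalg_product I F)"
proof -
  have ring: "\<And>i. i \<in> I \<Longrightarrow> ring (F i)"
    using F implicitly_closed_field_is_field field.is_ring by blast
  have "is_icalg (icalg_product I F)"
    unfolding is_icalg_def icalg_product_def
    by (auto simp: PiE_iff ring.ring_simprules[OF ring] implicitly_closed_field_closed[OF F])
  moreover have "embeds_into_product (icalg_product I F) I F (\<lambda>x. x)"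
    unfolding embeds_into_product_def icalg_product_def by simp
  ultimately show ?thesis
    unfolding ICM_def using F by blast
qed

lemma ring_hom_into_icalg_product:
  assumes "\<And>i. i \<in> I \<Longrightarrow> \<chi> i \<in> ring_hom R (F i)"
  shows "(\<lambda>r. \<lambda>i\<in>I. \<chi> i r) \<in> ring_hom R (reduct (icalg_product I F))"
  using assms ring_hom_memE[OF assms]
  by (intro ring_hom_memI) (auto simp: icalg_product_def cong: restrict_cong)

lemma inj_on_separating_hom_into_icalg_product:
  fixes F :: "'i \<Rightarrow> 'f icalg"
  assumes R: "ring R" and F: "\<And>i. i \<in> I \<Longrightarrow> implicitly_closed_field (F i)"
    and \<chi>: "\<And>i. i \<in> I \<Longrightarrow> \<chi> i \<in> ring_hom R (F i)"
    and separating: "\<And>x. x \<in> carrier R \<Longrightarrow> x \<noteq> \<zero>\<^bsub>R\<^esub> \<Longrightarrow> \<exists>i\<in>I. \<chi> i x \<noteq> \<zero>\<^bsub>F i\<^esub>"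
  shows "inj_on (\<lambda>r. \<lambda>i\<in>I. \<chi> i r) (carrier R)"
proof -
  let ?B = "reduct (icalg_product I F)"
  have "cring ?B"
    using ICM_icalg_product[OF F] by (rule ICM_reduct_reduced_cring(1))
  moreover have "(\<lambda>r. \<lambda>i\<in>I. \<chi> i r) \<in> ring_hom R ?B"
    by (rule ring_hom_into_icalg_product[where I = I and F = F and \<chi> = \<chi>, OF \<chi>])
  ultimately interpret h: ring_hom_ring R ?B "\<lambda>r. \<lambda>i\<in>I. \<chi> i r"
    using ring_hom_ringI2[OF R cring.axioms(1)] by blast
  have "x = \<zero>\<^bsub>R\<^esub>" if x: "x \<in> carrier R" "(\<lambda>i\<in>I. \<chi> i x) = \<zero>\<^bsub>?B\<^esub>" for x
  proof (rule ccontr)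
    assume "x \<noteq> \<zero>\<^bsub>R\<^esub>"
    then obtain i where "i \<in> I" "\<chi> i x \<noteq> \<zero>\<^bsub>F i\<^esub>"
      using separating x(1) by blast
    moreover have "(\<lambda>i\<in>I. \<chi> i x) i = \<zero>\<^bsub>F i\<^esub>"
      using x(2) \<open>i \<in> I\<close> by (simp add: icalg_product_def)
    ultimately show False
      by simp
  qed
  then have "a_kernel R ?B (\<lambda>r. \<lambda>i\<in>I. \<chi> i r) = {\<zero>\<^bsub>R\<^esub>}"
    unfolding a_kernel_def' using h.hom_zero by auto
  then show ?thesis
    by (rule h.trivial_ker_imp_inj)
qed

lemma reduced_cring_embeds_into_ICM:
  fixes R :: "'b ring"
  assumes R: "cring R" "reduced_ring R"
  obtains B :: "('b set \<Rightarrow> 'b list set) icalg" and h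
  where "ICM TYPE('b set) TYPE('b list set) B" "h \<in> ring_hom R (reduct B)" "inj_on h (carrier R)"
proof -
  \<comment> \<open>The index type is \<open>'b set\<close>: the field separating a nonzero \<open>x\<close> from \<open>\<zero>\<close> gets index \<open>{x}\<close>.\<close>
  define I where "I = {{x} | x. x \<in> carrier R \<and> x \<noteq> \<zero>\<^bsub>R\<^esub>}"
  have "\<forall>i\<in>I. \<exists>F :: 'b list set icalg. \<exists>\<chi>.
      implicitly_closed_field F \<and> \<chi> \<in> ring_hom R F \<and> \<chi> (the_elem i) \<noteq> \<zero>\<^bsub>F\<^esub>"
  proof
    fix i assume "i \<in> I"
    then obtain x where x: "i = {x}" "x \<in> carrier R" "x \<noteq> \<zero>\<^bsub>R\<^esub>"
      unfolding I_def by blast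
    obtain F :: "'b list set icalg" and \<chi>
      where "implicitly_closed_field F" "\<chi> \<in> ring_hom R F" "\<chi> x \<noteq> \<zero>\<^bsub>F\<^esub>"
      by (rule reduced_cring_implicitly_closed_field_hom_nonzero[OF R x(2,3)])
    then show "\<exists>F :: 'b list set icalg. \<exists>\<chi>.
        implicitly_closed_field F \<and> \<chi> \<in> ring_hom R F \<and> \<chi> (the_elem i) \<noteq> \<zero>\<^bsub>F\<^esub>"
      using x(1) by auto
  qed
  then obtain F :: "'b set \<Rightarrow> 'b list set icalg" and \<chi> where
    F: "\<And>i. i \<in> I \<Longrightarrow> implicitly_closed_field (F i)" and
    \<chi>: "\<And>i. i \<in> I \<Longrightarrow> \<chi> i \<in> ring_hom R (F i)" and
    separating: "\<And>i. i \<in> I \<Longrightarrow> \<chi> i (the_elem i) \<noteq> \<zero>\<^bsub>F i\<^esub>"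
    by metis
  have nonzero: "\<exists>i\<in>I. \<chi> i x \<noteq> \<zero>\<^bsub>F i\<^esub>" if "x \<in> carrier R" "x \<noteq> \<zero>\<^bsub>R\<^esub>" for x
    using separating[of "{x}"] that unfolding I_def by auto
  have "inj_on (\<lambda>r. \<lambda>i\<in>I. \<chi> i r) (carrier R)"
    by (rule inj_on_separating_hom_into_icalg_product[where I = I and F = F and \<chi> = \<chi>,
          OF cring.axioms(1)[OF R(1)] F \<chi> nonzero])
  moreover have "(\<lambda>r. \<lambda>i\<in>I. \<chi> i r) \<in> ring_hom R (reduct (icalg_product I F))"
    by (rule ring_hom_into_icalg_product[where I = I and F = F and \<chi> = \<chi>, OF \<chi>])
  ultimately show thesis
    by (intro that[OF ICM_icalg_product[OF F]])
qed

theorem mainTheorem16: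
  shows "(\<forall>A :: ('a, 'm) icalg_scheme.
            ICM TYPE('i) TYPE('f) A \<longrightarrow> cring (reduct A) \<and> reduced_ring (reduct A))
       \<and> (\<forall>R :: 'b ring. cring R \<and> reduced_ring R \<longrightarrow>
            (\<exists>B :: ('b set \<Rightarrow> 'b list set) icalg.
               ICM TYPE('b set) TYPE('b list set) B \<and>
               (\<exists>h. h \<in> ring_hom R (reduct B) \<and> inj_on h (carrier R))))"
proof (intro conjI allI impI)
  fix A :: "('a, 'm) icalg_scheme"
  assume "ICM TYPE('i) TYPE('f) A"
  then show "cring (reduct A)" "reduced_ring (reduct A)"
    by (rule ICM_reduct_reduced_cring)+
next
  fix R :: "'b ring"
  assume "cring R \<and> reduced_ring R"
  then obtain B :: "('b set \<Rightarrow> 'b list set) icalg" and h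
    where "ICM TYPE('b set) TYPE('b list set) B" "h \<in> ring_hom R (reduct B)" "inj_on h (carrier R)"
    by (auto elim: reduced_cring_embeds_into_ICM)
  then show "\<exists>B :: ('b set \<Rightarrow> 'b list set) icalg. ICM TYPE('b set) TYPE('b list set) B \<and>
      (\<exists>h. h \<in> ring_hom R (reduct B) \<and> inj_on h (carrier R))"
    by blast
qed

end
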